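(* Let $X$ be a quasi-geodesic metric space and let $G\curvearrowright X$ be a cobounded quasi-action with coarse stabiliser $H$. Then: (1) $G$ is finitely generated relative to $H$; (2) $H$ is a commensurated subgroup of $G$; (3) the quasi-action $G\curvearrowright X$ is quasi-conjugate to the natural left action of $G$ on $G/H$ (equipped with the relative word metric with respect to a finite relative generating set); in particular $G/H$ is quasi-isometric to $X$.
   Context: Quasi-action, cobounded, quasi-geodesic: a $(K,A)$-quasi-action assigns to each $g\in G$ a $(K,A)$-quasi-isometry $x\mapsto g\cdot x$ with $d(h\cdot(g\cdot x),hg\cdot x)\le A$ and $d(e\cdot x,x)\le A$; cobounded means some $r$ has: for all $x,y$ there is $g$ with $d(g\cdot x,y)\le r$. $T\subseteq G$ is bounded if $\{t\cdot x_0:t\in T\}$ is bounded. A coarse stabiliser is a bounded subgroup $H$ such that every bounded subset of $G$ lies in finitely many left $H$-cosets. $G$ is finitely generated relative to $H$ if there is a finite $S\subseteq G$ with $S\cup H$ generating $G$. For such $S$, the relative word metric on $G/H$ is the path metric of the graph with vertices the left cosets $gH$ and edges $(gH,gsH)$ for $g\in G$, $s\in S$. $H$ is commensurated if $gHg^{-1}\cap H$ has finite index in both $H$ and $gHg^{-1}$ for all $g$. Quasi-actions $G\curvearrowright X$, $G\curvearrowright Y$ are quasi-conjugate if there is a quasi-isometry $f:X\to Y$ with $\sup_{g,x}d(g\cdot f(x),f(g\cdot x))<\infty$. *)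

theory Defs
  imports "HOL-Analysis.Analysis" "HOL-Algebra.Algebra"
begin

definition quasi_isometry_on ::
  "real \<Rightarrow> real \<Rightarrow> ('a \<Rightarrow> 'a \<Rightarrow> real) \<Rightarrow> 'a set \<Rightarrow>
   ('b \<Rightarrow> 'b \<Rightarrow> real) \<Rightarrow> 'b set \<Rightarrow> ('a \<Rightarrow> 'b) \<Rightarrow> bool" where
  "quasi_isometry_on K A dX S dY T f \<longleftrightarrow>
     f ` S \<subseteq> T \<and>
     (\<forall>x\<in>S. \<forall>y\<in>S. dX x y / K - A \<le> dY (f x) (f y) \<and> dY (f x) (f y) \<le> K * dX x y + A) \<and>
     (\<forall>z\<in>T. \<exists>x\<in>S. dY (f x) z \<le> A)"

definition quasi_isometric_map ::
  "('a \<Rightarrow> 'a \<Rightarrow> real) \<Rightarrow> 'a set \<Rightarrow> ('b \<Rightarrow> 'b \<Rightarrow> real) \<Rightarrow> 'b set \<Rightarrow> ('a \<Rightarrow> 'b) \<Rightarrow> bool" where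
  "quasi_isometric_map dX S dY T f \<longleftrightarrow> (\<exists>K A. K \<ge> 1 \<and> A \<ge> 0 \<and> quasi_isometry_on K A dX S dY T f)"

definition quasi_geodesic_space :: "'x::metric_space itself \<Rightarrow> bool" where
  "quasi_geodesic_space _ \<longleftrightarrow> (\<exists>K C. K \<ge> 1 \<and> C \<ge> 0 \<and>
     (\<forall>x y::'x. \<exists>(\<gamma>::real \<Rightarrow> 'x) L. L \<ge> 0 \<and> \<gamma> 0 = x \<and> \<gamma> L = y \<and>
        (\<forall>s\<in>{0..L}. \<forall>t\<in>{0..L}. \<bar>s - t\<bar> / K - C \<le> dist (\<gamma> s) (\<gamma> t) \<and>
                                     dist (\<gamma> s) (\<gamma> t) \<le> K * \<bar>s - t\<bar> + C)))"

definition quasi_action ::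
  "('g, 'm) monoid_scheme \<Rightarrow> real \<Rightarrow> real \<Rightarrow> ('g \<Rightarrow> 'x::metric_space \<Rightarrow> 'x) \<Rightarrow> bool" where
  "quasi_action G K A act \<longleftrightarrow>
     (\<forall>g\<in>carrier G. quasi_isometry_on K A dist UNIV dist UNIV (act g)) \<and>
     (\<forall>g\<in>carrier G. \<forall>h\<in>carrier G. \<forall>x. dist (act h (act g x)) (act (h \<otimes>\<^bsub>G\<^esub> g) x) \<le> A) \<and>
     (\<forall>x. dist (act \<one>\<^bsub>G\<^esub> x) x \<le> A)"

definition is_quasi_action :: "('g, 'm) monoid_scheme \<Rightarrow> ('g \<Rightarrow> 'x::metric_space \<Rightarrow> 'x) \<Rightarrow> bool" where
  "is_quasi_action G act \<longleftrightarrow> (\<exists>K A. quasi_action G K A act)"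

definition cobounded_qa :: "('g, 'm) monoid_scheme \<Rightarrow> ('g \<Rightarrow> 'x::metric_space \<Rightarrow> 'x) \<Rightarrow> bool" where
  "cobounded_qa G act \<longleftrightarrow> (\<exists>r. \<forall>x y. \<exists>g\<in>carrier G. dist (act g x) y \<le> r)"

definition qa_bounded :: "('g \<Rightarrow> 'x::metric_space \<Rightarrow> 'x) \<Rightarrow> 'x \<Rightarrow> 'g set \<Rightarrow> bool" where
  "qa_bounded act x0 T \<longleftrightarrow> bounded ((\<lambda>t. act t x0) ` T)"

definition coarse_stabiliser ::
  "('g, 'm) monoid_scheme \<Rightarrow> ('g \<Rightarrow> 'x::metric_space \<Rightarrow> 'x) \<Rightarrow> 'x \<Rightarrow> 'g set \<Rightarrow> bool" where
  "coarse_stabiliser G act x0 H \<longleftrightarrow>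
     subgroup H G \<and> qa_bounded act x0 H \<and>
     (\<forall>T. T \<subseteq> carrier G \<longrightarrow> qa_bounded act x0 T \<longrightarrow>
        (\<exists>F. finite F \<and> F \<subseteq> carrier G \<and> T \<subseteq> (\<Union>g\<in>F. l_coset G g H)))"

definition rel_fin_gen :: "('g, 'm) monoid_scheme \<Rightarrow> 'g set \<Rightarrow> 'g set \<Rightarrow> bool" where
  "rel_fin_gen G H S \<longleftrightarrow> finite S \<and> S \<subseteq> carrier G \<and> generate G (S \<union> H) = carrier G"

definition fin_gen_relative :: "('g, 'm) monoid_scheme \<Rightarrow> 'g set \<Rightarrow> bool" where
  "fin_gen_relative G H \<longleftrightarrow> (\<exists>S. rel_fin_gen G H S)"

text \<open>K has finite index in L (number of left cosets of K meeting L is finite; K \<subseteq> L).\<close>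
definition finite_index_in :: "('g, 'm) monoid_scheme \<Rightarrow> 'g set \<Rightarrow> 'g set \<Rightarrow> bool" where
  "finite_index_in G K L \<longleftrightarrow> finite {l_coset G g K | g. g \<in> L}"

definition commensurated :: "('g, 'm) monoid_scheme \<Rightarrow> 'g set \<Rightarrow> bool" where
  "commensurated G H \<longleftrightarrow> subgroup H G \<and>
     (\<forall>g\<in>carrier G. let C = (\<lambda>h. g \<otimes>\<^bsub>G\<^esub> h \<otimes>\<^bsub>G\<^esub> inv\<^bsub>G\<^esub> g) ` H in
        finite_index_in G (C \<inter> H) H \<and> finite_index_in G (C \<inter> H) C)"

definition left_cosets :: "('g, 'm) monoid_scheme \<Rightarrow> 'g set \<Rightarrow> 'g set set" where
  "left_cosets G H = {l_coset G g H | g. g \<in> carrier G}"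

definition rel_edges :: "('g, 'm) monoid_scheme \<Rightarrow> 'g set \<Rightarrow> 'g set \<Rightarrow> ('g set \<times> 'g set) set" where
  "rel_edges G H S = {(a, b). \<exists>g\<in>carrier G. \<exists>s\<in>S.
      (a = l_coset G g H \<and> b = l_coset G (g \<otimes>\<^bsub>G\<^esub> s) H) \<or>
      (b = l_coset G g H \<and> a = l_coset G (g \<otimes>\<^bsub>G\<^esub> s) H)}"

definition rel_word_dist :: "('g, 'm) monoid_scheme \<Rightarrow> 'g set \<Rightarrow> 'g set \<Rightarrow> 'g set \<Rightarrow> 'g set \<Rightarrow> real" where
  "rel_word_dist G H S a b = real (LEAST n. (a, b) \<in> rel_edges G H S ^^ n)"

end

theory Submission
  imports Defs
begin

(* Everything is read off the orbit map g \<mapsto> g x0, which is coarsely surjective by coboundedness;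
   the coarse stabiliser H makes every set of group elements with bounded orbit meet only finitely
   many cosets fH.
   Following a quasi-geodesic from x0 to g x0 and replacing its points by nearby orbit points writes
   g as a product of elements of bounded displacement, hence of elements of finitely many cosets fH:
   these f generate G relative to H.  The conjugates g H g^-1 and g^-1 H g have bounded orbits, so
   they meet finitely many H-cosets, which is commensuration.  Finally, adjacent cosets of the
   relative Cayley graph have orbits at bounded distance, and conversely orbit points at bounded
   distance lie in cosets at bounded word distance; with the quasi-geodesic chains this makes
   x \<mapsto> (an orbit point near x) H a quasi-isometry X \<rightarrow> G/H, coarsely equivariant since the
   quasi-action is coarsely associative. *)

(* Otherwise [<#] is ambiguous with the ASCII syntax for multiset inclusion. *)
no_notation (ASCII) subset_mset (infix \<open><#\<close> 50)

lemma qa_bounded_iff: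
  "qa_bounded act x0 T \<longleftrightarrow> (\<exists>B. \<forall>t\<in>T. dist (act t x0) x0 \<le> B)"
  unfolding qa_bounded_def bounded_any_center[where a = x0] by (simp add: dist_commute)

lemma quasi_isometric_mapI:
  assumes into: "f ` S \<subseteq> T"
    and upper: "\<And>x y. x \<in> S \<Longrightarrow> y \<in> S \<Longrightarrow> dY (f x) (f y) \<le> a * dX x y + b"
    and lower: "\<And>x y. x \<in> S \<Longrightarrow> y \<in> S \<Longrightarrow> dX x y \<le> c * dY (f x) (f y) + e"
    and dense: "\<And>z. z \<in> T \<Longrightarrow> \<exists>x\<in>S. dY (f x) z \<le> e'"
    and dX_nonneg: "\<And>x y. x \<in> S \<Longrightarrow> y \<in> S \<Longrightarrow> 0 \<le> dX x y"
    and dY_nonneg: "\<And>x y. x \<in> S \<Longrightarrow> y \<in> S \<Longrightarrow> 0 \<le> dY (f x) (f y)"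
  shows "quasi_isometric_map dX S dY T f"
proof -
  define K where "K = max 1 (max a c)"
  define A where "A = max 0 (max b (max e e'))"
  have K: "1 \<le> K" "a \<le> K" "c \<le> K" and A: "0 \<le> A" "b \<le> A" "e \<le> A" "e' \<le> A"
    unfolding K_def A_def by auto
  have "dX x y / K - A \<le> dY (f x) (f y) \<and> dY (f x) (f y) \<le> K * dX x y + A"
    if "x \<in> S" "y \<in> S" for x y
  proof
    have "dY (f x) (f y) \<le> a * dX x y + b" using upper that .
    also have "\<dots> \<le> K * dX x y + A"
      using K(2) A(2) dX_nonneg[OF that] by (intro add_mono mult_right_mono) auto
    finally show "dY (f x) (f y) \<le> K * dX x y + A" .
    have "dX x y \<le> c * dY (f x) (f y) + e" using lower that .
    also have "\<dots> \<le> K * dY (f x) (f y) + K * A"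
      using K(1,3) A(1,3) dY_nonneg[OF that] mult_right_mono[of 1 K A]
      by (intro add_mono mult_right_mono) auto
    finally have "dX x y / K \<le> dY (f x) (f y) + A"
      using K(1) by (simp add: divide_le_eq algebra_simps)
    then show "dX x y / K - A \<le> dY (f x) (f y)" by simp
  qed
  moreover have "\<exists>x\<in>S. dY (f x) z \<le> A" if "z \<in> T" for z
    using dense[OF that] A(4) by force
  ultimately have "quasi_isometry_on K A dX S dY T f"
    unfolding quasi_isometry_on_def using into by blast
  then show ?thesis
    unfolding quasi_isometric_map_def using K(1) A(1) by blast
qed

lemma quasi_geodesic_space_chains:
  assumes "quasi_geodesic_space TYPE('x::metric_space)"
  obtains c1 c2 D where "0 \<le> c1"
    and "\<And>x y::'x. \<exists>p N. 0 < N \<and> p 0 = x \<and> p N = y \<and> real N \<le> c1 * dist x y + c2 \<and>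
                        (\<forall>i<N. dist (p i) (p (Suc i)) \<le> D)"
proof -
  obtain K C where K: "K \<ge> 1" and
    quasi_geodesic: "\<forall>x y::'x. \<exists>(\<gamma>::real \<Rightarrow> 'x) L. L \<ge> 0 \<and> \<gamma> 0 = x \<and> \<gamma> L = y \<and>
        (\<forall>s\<in>{0..L}. \<forall>t\<in>{0..L}. \<bar>s - t\<bar> / K - C \<le> dist (\<gamma> s) (\<gamma> t) \<and>
                                     dist (\<gamma> s) (\<gamma> t) \<le> K * \<bar>s - t\<bar> + C)"
    using assms unfolding quasi_geodesic_space_def by blast
  have "\<exists>p N. 0 < N \<and> p 0 = x \<and> p N = y \<and> real N \<le> K * dist x y + (K * C + 2) \<and>
           (\<forall>i<N. dist (p i) (p (Suc i)) \<le> K + C)" for x y :: 'x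
  proof -
    obtain \<gamma> L where L: "L \<ge> 0" and \<gamma>: "\<gamma> 0 = x" "\<gamma> L = y" and
      qi: "\<forall>s\<in>{0..L}. \<forall>t\<in>{0..L}. \<bar>s - t\<bar> / K - C \<le> dist (\<gamma> s) (\<gamma> t) \<and>
                                  dist (\<gamma> s) (\<gamma> t) \<le> K * \<bar>s - t\<bar> + C"
      using quasi_geodesic by blast
    define N where "N = Suc (nat \<lceil>L\<rceil>)"
    define p where "p i = \<gamma> (min (real i) L)" for i
    have N: "L \<le> real N" "real N \<le> L + 2"
      unfolding N_def using L by linarith+
    have "L / K - C \<le> dist x y"
      using qi[rule_format, of 0 L] L \<gamma> by simp
    then have "L \<le> K * dist x y + K * C"
      using K by (simp add: divide_le_eq algebra_simps)
    then have "real N \<le> K * dist x y + (K * C + 2)" using N by linarith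
    moreover have "dist (p i) (p (Suc i)) \<le> K + C" for i
    proof -
      have "min (real i) L \<in> {0..L}" "min (real (Suc i)) L \<in> {0..L}" using L by auto
      then have "dist (p i) (p (Suc i)) \<le> K * \<bar>min (real i) L - min (real (Suc i)) L\<bar> + C"
        unfolding p_def using qi by blast
      also have "\<dots> \<le> K * 1 + C"
        using K by (intro add_right_mono mult_left_mono) auto
      finally show ?thesis by simp
    qed
    moreover have "p 0 = x" "p N = y" unfolding p_def using L N \<gamma> by auto
    ultimately show ?thesis unfolding N_def by blast
  qed
  then show thesis using K by (intro that[of K "K * C + 2" "K + C"]) auto
qed

lemma (in group) l_coset_eq_iff:
  assumes "subgroup H G" "x \<in> carrier G" "y \<in> carrier G"
  shows "x <# H = y <# H \<longleftrightarrow> inv x \<otimes> y \<in> H"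
proof
  assume "x <# H = y <# H"
  then have "y \<in> x <# H" using lcos_self[OF assms(3,1)] by simp
  then show "inv x \<otimes> y \<in> H" using subgroup.lcos_module_imp[OF assms(1) is_group assms(2)] by simp
next
  assume "inv x \<otimes> y \<in> H"
  then have "y \<in> x <# H" using subgroup.lcos_module_rev[OF assms(1) is_group assms(2,3)] by simp
  then show "x <# H = y <# H" using l_repr_independence[OF _ assms(2,1)] by simp
qed

lemma (in group) finite_cosets_if_fibres:
  assumes P: "subgroup P G" and T: "T \<subseteq> carrier G" and fin: "finite (k ` T)"
    and fibres: "\<And>t t'. t \<in> T \<Longrightarrow> t' \<in> T \<Longrightarrow> k t = k t' \<Longrightarrow> inv t \<otimes> t' \<in> P"
  shows "finite {t <# P | t. t \<in> T}"
proof -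
  define pick where "pick c = (SOME t. t \<in> T \<and> k t = c)" for c
  have "t <# P = pick (k t) <# P" if t: "t \<in> T" for t
  proof -
    have pick: "pick (k t) \<in> T" "k (pick (k t)) = k t"
      unfolding pick_def using someI_ex[of "\<lambda>t'. t' \<in> T \<and> k t' = k t"] t by blast+
    then have "inv t \<otimes> pick (k t) \<in> P" using fibres t by metis
    then show ?thesis using l_coset_eq_iff[OF P] T t pick(1) by blast
  qed
  then have "{t <# P | t. t \<in> T} \<subseteq> (\<lambda>c. pick c <# P) ` k ` T" by blast
  then show ?thesis using fin finite_subset by blast
qed

lemma (in group) conjugate_subgroup:
  assumes "subgroup H G" "g \<in> carrier G"
  shows "subgroup ((\<lambda>h. g \<otimes> h \<otimes> inv g) ` H) G"
proof -
  have "(\<lambda>h. g \<otimes> h \<otimes> inv g) ` H = inv (inv g) <# H #> inv g"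
    unfolding l_coset_def r_coset_def using assms by (simp add: image_iff) blast
  then show ?thesis using subgroup_conjugation_is_surj1[of "inv g" H] assms by simp
qed

lemma (in group) inv_conjugate_mult:
  assumes "g \<in> carrier G" "x \<in> carrier G" "y \<in> carrier G"
  shows "inv (inv g \<otimes> x \<otimes> g) \<otimes> (inv g \<otimes> y \<otimes> g) = inv g \<otimes> (inv x \<otimes> y) \<otimes> g"
  using assms by (simp add: inv_mult_group m_assoc) (simp add: m_assoc[symmetric])

locale relative_cayley_graph = group G for G :: "('g, 'm) monoid_scheme" (structure) +
  fixes H S :: "'g set"
  assumes H_subgroup: "subgroup H G" and S_rel_gen: "rel_fin_gen G H S"
begin

abbreviation edges where "edges \<equiv> rel_edges G H S"

abbreviation word_dist where "word_dist \<equiv> rel_word_dist G H S"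

lemma H_carrier: "H \<subseteq> carrier G"
  using subgroup.subset[OF H_subgroup] .

lemma S_carrier: "S \<subseteq> carrier G"
  using S_rel_gen unfolding rel_fin_gen_def by blast

lemma l_coset_mult_mem: "a \<in> carrier G \<Longrightarrow> h \<in> H \<Longrightarrow> (a \<otimes> h) <# H = a <# H"
  using l_coset_eq_iff[OF H_subgroup, of a "a \<otimes> h"] H_carrier by (auto simp: m_assoc[symmetric])

lemma edgesI:
  assumes "g \<in> carrier G" "s \<in> S"
  shows "(g <# H, (g \<otimes> s) <# H) \<in> edges" "((g \<otimes> s) <# H, g <# H) \<in> edges"
  using assms unfolding rel_edges_def by blast+

lemma edges_source_coset: "(P, Q) \<in> edges \<Longrightarrow> \<exists>c\<in>carrier G. P = c <# H"
  using S_carrier unfolding rel_edges_def by blast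

lemma generate_coset_walk:
  "g \<in> generate G (S \<union> H) \<Longrightarrow> \<exists>n. \<forall>a\<in>carrier G. (a <# H, (a \<otimes> g) <# H) \<in> edges ^^ n"
proof (induction rule: generate.induct)
  case one
  show ?case by (intro exI[of _ 0]) auto
next
  case (incl h)
  show ?case
  proof (cases "h \<in> S")
    case True
    then show ?thesis using edgesI(1) by (intro exI[of _ 1]) auto
  next
    case False
    then show ?thesis using incl l_coset_mult_mem by (intro exI[of _ 0]) auto
  qed
next
  case (inv h)
  show ?case
  proof (cases "h \<in> S")
    case True
    then have h: "h \<in> carrier G" using S_carrier by blast
    have "(a <# H, (a \<otimes> inv h) <# H) \<in> edges" if a: "a \<in> carrier G" for a
      using edgesI(2)[of "a \<otimes> inv h" h] True a h by (simp add: m_assoc)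
    then show ?thesis by (intro exI[of _ 1]) auto
  next
    case False
    then have "inv h \<in> H" using inv subgroup.m_inv_closed[OF H_subgroup] by blast
    then show ?thesis using l_coset_mult_mem by (intro exI[of _ 0]) auto
  qed
next
  case (eng g h)
  obtain m n where
    m: "\<forall>a\<in>carrier G. (a <# H, (a \<otimes> g) <# H) \<in> edges ^^ m" and
    n: "\<forall>a\<in>carrier G. (a <# H, (a \<otimes> h) <# H) \<in> edges ^^ n"
    using eng.IH by blast
  have gh: "g \<in> carrier G" "h \<in> carrier G"
    using eng.hyps generate_in_carrier S_carrier H_carrier by (meson Un_least)+
  have "(a <# H, (a \<otimes> (g \<otimes> h)) <# H) \<in> edges ^^ (m + n)" if a: "a \<in> carrier G" for a
  proof -
    have "(a <# H, (a \<otimes> g) <# H) \<in> edges ^^ m" using m a by blast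
    moreover have "((a \<otimes> g) <# H, (a \<otimes> g \<otimes> h) <# H) \<in> edges ^^ n" using n a gh by simp
    ultimately show ?thesis using a gh by (auto simp: relpow_add m_assoc)
  qed
  then show ?case by blast
qed

lemma coset_walk: "g \<in> carrier G \<Longrightarrow> \<exists>n. \<forall>a\<in>carrier G. (a <# H, (a \<otimes> g) <# H) \<in> edges ^^ n"
  using generate_coset_walk S_rel_gen unfolding rel_fin_gen_def by blast

lemma word_dist_nonneg: "0 \<le> word_dist P Q"
  unfolding rel_word_dist_def by simp

lemma word_dist_le_walk: "(P, Q) \<in> edges ^^ n \<Longrightarrow> word_dist P Q \<le> real n"
  unfolding rel_word_dist_def by (simp add: Least_le)

(* rel_word_dist is a LEAST over walk lengths; it is attained because the graph is connected. *)
lemma word_dist_attained: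
  assumes "a \<in> carrier G" "b \<in> carrier G"
  shows "\<exists>n. word_dist (a <# H) (b <# H) = real n \<and> (a <# H, b <# H) \<in> edges ^^ n"
proof -
  obtain n where "(a <# H, (a \<otimes> (inv a \<otimes> b)) <# H) \<in> edges ^^ n"
    using coset_walk[of "inv a \<otimes> b"] assms by blast
  moreover have "a \<otimes> (inv a \<otimes> b) = b"
    using assms by (simp add: m_assoc[symmetric])
  ultimately have "\<exists>n. (a <# H, b <# H) \<in> edges ^^ n"
    by auto
  then have "(a <# H, b <# H) \<in> edges ^^ (LEAST n. (a <# H, b <# H) \<in> edges ^^ n)"
    by (rule LeastI_ex)
  then show ?thesis unfolding rel_word_dist_def by blast
qed

lemma word_dist_triangle:
  assumes "a \<in> carrier G" "b \<in> carrier G" "c \<in> carrier G"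
  shows "word_dist (a <# H) (c <# H) \<le> word_dist (a <# H) (b <# H) + word_dist (b <# H) (c <# H)"
proof -
  obtain m where m: "word_dist (a <# H) (b <# H) = real m" "(a <# H, b <# H) \<in> edges ^^ m"
    using word_dist_attained[OF assms(1,2)] by blast
  obtain n where n: "word_dist (b <# H) (c <# H) = real n" "(b <# H, c <# H) \<in> edges ^^ n"
    using word_dist_attained[OF assms(2,3)] by blast
  have "(a <# H, c <# H) \<in> edges ^^ (m + n)"
    unfolding relpow_add using m(2) n(2) by (rule relcompI)
  then show ?thesis using word_dist_le_walk m(1) n(1) by fastforce
qed

lemma word_dist_chain:
  assumes "\<forall>i. q i \<in> carrier G" "\<forall>i<M. word_dist (q i <# H) (q (Suc i) <# H) \<le> N"
  shows "word_dist (q 0 <# H) (q M <# H) \<le> N * M"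
  using assms(2)
proof (induction M)
  case 0
  then show ?case using word_dist_le_walk[of "q 0 <# H" "q 0 <# H" 0] by simp
next
  case (Suc M)
  have "word_dist (q 0 <# H) (q (Suc M) <# H)
      \<le> word_dist (q 0 <# H) (q M <# H) + word_dist (q M <# H) (q (Suc M) <# H)"
    using word_dist_triangle assms(1) by blast
  also have "\<dots> \<le> N * M + N" using Suc by (intro add_mono) auto
  finally show ?case by (simp add: algebra_simps)
qed

lemma word_dist_translate_bounded:
  assumes "finite F" "F \<subseteq> carrier G"
  shows "\<exists>N. \<forall>f\<in>F. \<forall>a\<in>carrier G. word_dist (a <# H) ((a \<otimes> f) <# H) \<le> N"
proof -
  have "\<forall>f\<in>F. \<exists>n. \<forall>a\<in>carrier G. (a <# H, (a \<otimes> f) <# H) \<in> edges ^^ n"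
    using coset_walk assms(2) by blast
  then obtain len where len: "\<forall>f\<in>F. \<forall>a\<in>carrier G. (a <# H, (a \<otimes> f) <# H) \<in> edges ^^ len f"
    by (metis bchoice)
  have "word_dist (a <# H) ((a \<otimes> f) <# H) \<le> (\<Sum>f\<in>F. real (len f))"
    if "f \<in> F" "a \<in> carrier G" for f a
  proof -
    have "word_dist (a <# H) ((a \<otimes> f) <# H) \<le> real (len f)"
      using word_dist_le_walk len that by blast
    also have "\<dots> \<le> (\<Sum>f\<in>F. real (len f))"
      using member_le_sum[of f F "\<lambda>f. real (len f)"] assms(1) that(1) by simp
    finally show ?thesis .
  qed
  then show ?thesis by blast
qed

end

locale cobounded_quasi_action = group G for G :: "('g, 'm) monoid_scheme" (structure) +
  fixes act :: "'g \<Rightarrow> 'x::metric_space \<Rightarrow> 'x" and K A r :: real and x0 :: 'x and H :: "'g set"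
  assumes quasi_action: "quasi_action G K A act"
    and orbit_dense: "\<exists>g\<in>carrier G. dist (act g x) y \<le> r"
    and coarse_stabiliser: "coarse_stabiliser G act x0 H"
begin

(* The definition of a quasi-action does not force K \<ge> 1. *)
definition lip :: real where "lip = max K 1"

lemma lip_ge_1: "1 \<le> lip"
  unfolding lip_def by simp

lemma lip_mult_mono: "x \<le> y \<Longrightarrow> lip * x \<le> lip * y"
  using lip_ge_1 by simp

lemma act_lipschitz: "g \<in> carrier G \<Longrightarrow> dist (act g x) (act g y) \<le> lip * dist x y + A"
proof -
  assume "g \<in> carrier G"
  then have "dist (act g x) (act g y) \<le> K * dist x y + A"
    using quasi_action unfolding quasi_action_def quasi_isometry_on_def by blast
  moreover have "K * dist x y \<le> lip * dist x y"
    unfolding lip_def by (intro mult_right_mono) auto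
  ultimately show ?thesis by linarith
qed

lemma act_mult: "g \<in> carrier G \<Longrightarrow> h \<in> carrier G \<Longrightarrow> dist (act h (act g x)) (act (h \<otimes> g) x) \<le> A"
  using quasi_action unfolding quasi_action_def by blast

lemma act_one: "dist (act \<one> x) x \<le> A"
  using quasi_action unfolding quasi_action_def by blast

lemma r_nonneg: "0 \<le> r"
  using orbit_dense[of x0 x0] zero_le_dist order.trans by blast

lemma act_mult_dist:
  assumes "a \<in> carrier G" "b \<in> carrier G"
  shows "dist (act (a \<otimes> b) y) (act a z) \<le> lip * dist (act b y) z + 2 * A"
proof -
  have "dist (act (a \<otimes> b) y) (act a (act b y)) \<le> A"
    using act_mult[OF assms(2,1), of y] by (simp add: dist_commute)
  moreover have "dist (act a (act b y)) (act a z) \<le> lip * dist (act b y) z + A"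
    using act_lipschitz[OF assms(1)] .
  ultimately show ?thesis
    using dist_triangle[of "act (a \<otimes> b) y" "act a z" "act a (act b y)"] by linarith
qed

lemma act_inv_mult_dist:
  assumes "a \<in> carrier G" "b \<in> carrier G"
  shows "dist (act (inv a \<otimes> b) x0) x0 \<le> lip * dist (act a x0) (act b x0) + 4 * A"
proof -
  have "dist (act (inv a \<otimes> b) x0) (act (inv a) (act a x0)) \<le> lip * dist (act a x0) (act b x0) + 2 * A"
    using act_mult_dist[of "inv a" b x0 "act a x0"] assms by (simp add: dist_commute)
  moreover have "dist (act (inv a) (act a x0)) (act \<one> x0) \<le> A"
    using act_mult[of a "inv a" x0] assms by simp
  moreover have "dist (act \<one> x0) x0 \<le> A"
    by (rule act_one)
  ultimately show ?thesis
    using dist_triangle[of "act (inv a \<otimes> b) x0" x0 "act (inv a) (act a x0)"]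
      dist_triangle[of "act (inv a) (act a x0)" x0 "act \<one> x0"] by linarith
qed

lemma stabiliser_subgroup: "subgroup H G"
  using coarse_stabiliser unfolding coarse_stabiliser_def by blast

lemma stabiliser_carrier: "H \<subseteq> carrier G"
  using subgroup.subset[OF stabiliser_subgroup] .

lemma stabiliser_orbit_bounded: "\<exists>B. \<forall>h\<in>H. dist (act h x0) x0 \<le> B"
  using coarse_stabiliser unfolding coarse_stabiliser_def qa_bounded_iff by blast

lemma bounded_orbit_finite_cover:
  assumes "T \<subseteq> carrier G" "\<forall>t\<in>T. dist (act t x0) x0 \<le> B"
  shows "\<exists>F. finite F \<and> F \<subseteq> carrier G \<and> T \<subseteq> (\<Union>f\<in>F. f <# H)"
proof -
  have cover: "\<forall>T. T \<subseteq> carrier G \<longrightarrow> qa_bounded act x0 T \<longrightarrow>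
      (\<exists>F. finite F \<and> F \<subseteq> carrier G \<and> T \<subseteq> (\<Union>g\<in>F. g <# H))"
    using coarse_stabiliser unfolding coarse_stabiliser_def by (elim conjE)
  have "qa_bounded act x0 T" unfolding qa_bounded_iff using assms(2) by blast
  then show ?thesis using cover assms(1) by simp
qed

lemma bounded_orbit_finite_cosets:
  assumes "T \<subseteq> carrier G" "\<forall>t\<in>T. dist (act t x0) x0 \<le> B"
  shows "finite ((\<lambda>t. t <# H) ` T)"
proof -
  obtain F where F: "finite F" "F \<subseteq> carrier G" "T \<subseteq> (\<Union>f\<in>F. f <# H)"
    using bounded_orbit_finite_cover[OF assms] by blast
  have "t <# H \<in> (\<lambda>f. f <# H) ` F" if t: "t \<in> T" for t
  proof -
    obtain f where f: "f \<in> F" "t \<in> f <# H" using F(3) t by blast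
    then have "f <# H = t <# H"
      using l_repr_independence[OF f(2) _ stabiliser_subgroup] F(2) by blast
    then show ?thesis using f(1) by blast
  qed
  then have "(\<lambda>t. t <# H) ` T \<subseteq> (\<lambda>f. f <# H) ` F" by blast
  then show ?thesis using F(1) by (rule finite_subset[OF _ finite_imageI])
qed

lemma bounded_orbit_translate:
  assumes T: "T \<subseteq> carrier G" "\<forall>t\<in>T. dist (act t x0) x0 \<le> B"
    and ab: "a \<in> carrier G" "b \<in> carrier G"
  shows "\<exists>B'. \<forall>t\<in>T. dist (act (a \<otimes> t \<otimes> b) x0) x0 \<le> B'"
proof -
  define Bb where "Bb = B + lip * dist (act b x0) x0 + 2 * A"
  have right: "dist (act (t \<otimes> b) x0) x0 \<le> Bb" if t: "t \<in> T" for t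
  proof -
    have "dist (act (t \<otimes> b) x0) (act t x0) \<le> lip * dist (act b x0) x0 + 2 * A"
      using act_mult_dist[of t b] T(1) t ab(2) by blast
    moreover have "dist (act t x0) x0 \<le> B" using T(2) t by blast
    ultimately show ?thesis
      unfolding Bb_def using dist_triangle[of "act (t \<otimes> b) x0" x0 "act t x0"] by linarith
  qed
  have "dist (act (a \<otimes> t \<otimes> b) x0) x0 \<le> lip * Bb + 2 * A + dist (act a x0) x0" if t: "t \<in> T" for t
  proof -
    have tb: "t \<otimes> b \<in> carrier G" using T(1) t ab(2) by blast
    have "t \<in> carrier G" using T(1) t by blast
    then have "a \<otimes> t \<otimes> b = a \<otimes> (t \<otimes> b)" using ab by (simp add: m_assoc)
    then have "dist (act (a \<otimes> t \<otimes> b) x0) x0 \<le> dist (act (a \<otimes> (t \<otimes> b)) x0) (act a x0) + dist (act a x0) x0"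
      using dist_triangle by simp
    also have "\<dots> \<le> lip * dist (act (t \<otimes> b) x0) x0 + 2 * A + dist (act a x0) x0"
      using act_mult_dist[OF ab(1) tb] by simp
    also have "\<dots> \<le> lip * Bb + 2 * A + dist (act a x0) x0"
      using lip_mult_mono[OF right[OF t]] by simp
    finally show ?thesis .
  qed
  then show ?thesis by blast
qed

lemma coset_orbit_bounded: "\<exists>C. \<forall>g\<in>carrier G. \<forall>a\<in>g <# H. dist (act a x0) (act g x0) \<le> C"
proof -
  obtain B where B: "\<forall>h\<in>H. dist (act h x0) x0 \<le> B"
    using stabiliser_orbit_bounded by blast
  have "dist (act a x0) (act g x0) \<le> lip * B + 2 * A" if g: "g \<in> carrier G" and a: "a \<in> g <# H" for g a
  proof -
    obtain h where h: "h \<in> H" "a = g \<otimes> h" using a unfolding l_coset_def by blast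
    have "h \<in> carrier G" using h(1) stabiliser_carrier by blast
    then have "dist (act a x0) (act g x0) \<le> lip * dist (act h x0) x0 + 2 * A"
      using act_mult_dist[OF g, of h x0 x0] h(2) by simp
    also have "\<dots> \<le> lip * B + 2 * A"
      using lip_mult_mono B h(1) by simp
    finally show ?thesis .
  qed
  then show ?thesis by blast
qed

lemma close_orbit_points_cover:
  "\<exists>F. finite F \<and> F \<subseteq> carrier G \<and>
     (\<forall>a\<in>carrier G. \<forall>b\<in>carrier G. dist (act a x0) (act b x0) \<le> R \<longrightarrow> (\<exists>f\<in>F. b \<in> (a \<otimes> f) <# H))"
proof -
  define T where "T = {t \<in> carrier G. dist (act t x0) x0 \<le> lip * R + 4 * A}"
  have "T \<subseteq> carrier G" "\<forall>t\<in>T. dist (act t x0) x0 \<le> lip * R + 4 * A"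
    unfolding T_def by auto
  then obtain F where F: "finite F" "F \<subseteq> carrier G" "T \<subseteq> (\<Union>f\<in>F. f <# H)"
    by (metis bounded_orbit_finite_cover)
  have "\<exists>f\<in>F. b \<in> (a \<otimes> f) <# H"
    if ab: "a \<in> carrier G" "b \<in> carrier G" and close: "dist (act a x0) (act b x0) \<le> R" for a b
  proof -
    have "dist (act (inv a \<otimes> b) x0) x0 \<le> lip * R + 4 * A"
      using act_inv_mult_dist[OF ab] lip_mult_mono[OF close] by linarith
    then have "inv a \<otimes> b \<in> T" unfolding T_def using ab by simp
    then obtain f where f: "f \<in> F" "inv a \<otimes> b \<in> f <# H" using F(3) by blast
    obtain h where h: "h \<in> H" "inv a \<otimes> b = f \<otimes> h"
      using f(2) unfolding l_coset_def by blast
    have "f \<in> carrier G" "h \<in> carrier G" using f(1) F(2) h(1) stabiliser_carrier by auto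
    then have "b = a \<otimes> f \<otimes> h"
      using ab h(2) by (metis inv_solve_left m_assoc m_closed)
    then have "b \<in> (a \<otimes> f) <# H" unfolding l_coset_def using h(1) by blast
    then show ?thesis using f(1) by blast
  qed
  with F(1,2) show ?thesis by blast
qed

definition orbit_rep :: "'x \<Rightarrow> 'g" where
  "orbit_rep x = (SOME g. g \<in> carrier G \<and> dist (act g x0) x \<le> r)"

lemma orbit_rep: "orbit_rep x \<in> carrier G" "dist (act (orbit_rep x) x0) x \<le> r"
proof -
  have "\<exists>g. g \<in> carrier G \<and> dist (act g x0) x \<le> r" using orbit_dense[of x0 x] by blast
  then have "orbit_rep x \<in> carrier G \<and> dist (act (orbit_rep x) x0) x \<le> r"
    unfolding orbit_rep_def by (rule someI_ex)
  then show "orbit_rep x \<in> carrier G" "dist (act (orbit_rep x) x0) x \<le> r" by blast+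
qed

lemma orbit_rep_dist:
  "dist (act (orbit_rep x) x0) (act (orbit_rep y) x0) \<le> dist x y + 2 * r"
  "dist x y \<le> dist (act (orbit_rep x) x0) (act (orbit_rep y) x0) + 2 * r"
  using orbit_rep(2)[of x] orbit_rep(2)[of y]
    dist_triangle[of "act (orbit_rep x) x0" "act (orbit_rep y) x0" x]
    dist_triangle[of x "act (orbit_rep y) x0" y]
    dist_triangle[of x y "act (orbit_rep x) x0"]
    dist_triangle[of "act (orbit_rep x) x0" y "act (orbit_rep y) x0"]
  by (simp_all add: dist_commute)

(* A coarse inverse of the orbit map gH \<mapsto> g x0. *)
definition orbit_coset :: "'x \<Rightarrow> 'g set" where
  "orbit_coset x = orbit_rep x <# H"

lemma orbit_chain:
  assumes "quasi_geodesic_space TYPE('x)"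
  obtains c1 c2 D where "0 \<le> c1"
    and "\<And>a b. a \<in> carrier G \<Longrightarrow> b \<in> carrier G \<Longrightarrow>
           \<exists>q N. q 0 = a \<and> q N = b \<and> real N \<le> c1 * dist (act a x0) (act b x0) + c2 \<and>
                 (\<forall>i. q i \<in> carrier G) \<and> (\<forall>i<N. dist (act (q i) x0) (act (q (Suc i)) x0) \<le> D)"
proof -
  obtain c1 c2 D where c1: "0 \<le> c1"
    and chain: "\<And>x y::'x. \<exists>p N. 0 < N \<and> p 0 = x \<and> p N = y \<and> real N \<le> c1 * dist x y + c2 \<and>
                                (\<forall>i<N. dist (p i) (p (Suc i)) \<le> D)"
    using quasi_geodesic_space_chains[OF assms] by metis
  have "\<exists>q N. q 0 = a \<and> q N = b \<and> real N \<le> c1 * dist (act a x0) (act b x0) + c2 \<and>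
          (\<forall>i. q i \<in> carrier G) \<and> (\<forall>i<N. dist (act (q i) x0) (act (q (Suc i)) x0) \<le> D + 2 * r)"
    if ab: "a \<in> carrier G" "b \<in> carrier G" for a b
  proof -
    obtain p N where N: "0 < N" and p: "p 0 = act a x0" "p N = act b x0"
      and len: "real N \<le> c1 * dist (act a x0) (act b x0) + c2"
      and step: "\<forall>i<N. dist (p i) (p (Suc i)) \<le> D"
      using chain[of "act a x0" "act b x0"] by blast
    \<comment> \<open>Move the chain into the orbit, keeping its endpoints; this is where \<open>0 < N\<close> is needed.\<close>
    define q where "q i = (if i = 0 then a else if i = N then b else orbit_rep (p i))" for i
    have q_carrier: "q i \<in> carrier G" for i
      unfolding q_def using ab orbit_rep(1) by simp
    have q_near: "dist (act (q i) x0) (p i) \<le> r" for i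
      unfolding q_def using p orbit_rep(2)[of "p i"] r_nonneg by auto
    have "dist (act (q i) x0) (act (q (Suc i)) x0) \<le> D + 2 * r" if "i < N" for i
    proof -
      have "dist (act (q i) x0) (act (q (Suc i)) x0)
          \<le> dist (act (q i) x0) (p i) + dist (p i) (p (Suc i)) + dist (act (q (Suc i)) x0) (p (Suc i))"
        using dist_triangle[of "act (q i) x0" "act (q (Suc i)) x0" "p i"]
          dist_triangle2[of "p i" "act (q (Suc i)) x0" "p (Suc i)"] by linarith
      then show ?thesis using q_near[of i] q_near[of "Suc i"] step that by fastforce
    qed
    moreover have "q 0 = a" "q N = b" unfolding q_def using N by auto
    ultimately show ?thesis using len q_carrier by blast
  qed
  then show thesis using c1 by (intro that[of c1 c2 "D + 2 * r"])
qed

lemma orbit_coarsely_connected: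
  assumes "quasi_geodesic_space TYPE('x)"
  obtains D where "\<And>P b. b \<in> carrier G \<Longrightarrow> P \<one> \<Longrightarrow>
    (\<And>c d. c \<in> carrier G \<Longrightarrow> d \<in> carrier G \<Longrightarrow> P c \<Longrightarrow> dist (act c x0) (act d x0) \<le> D \<Longrightarrow> P d) \<Longrightarrow>
    P b"
proof -
  obtain c1 c2 D where chain: "\<And>a b. a \<in> carrier G \<Longrightarrow> b \<in> carrier G \<Longrightarrow>
           \<exists>q N. q 0 = a \<and> q N = b \<and> real N \<le> c1 * dist (act a x0) (act b x0) + c2 \<and>
                 (\<forall>i. q i \<in> carrier G) \<and> (\<forall>i<N. dist (act (q i) x0) (act (q (Suc i)) x0) \<le> D)"
    using orbit_chain[OF assms] by metis
  have "P b" if b: "b \<in> carrier G" and one: "P \<one>"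
    and step: "\<And>c d. c \<in> carrier G \<Longrightarrow> d \<in> carrier G \<Longrightarrow> P c \<Longrightarrow>
                 dist (act c x0) (act d x0) \<le> D \<Longrightarrow> P d" for P b
  proof -
    obtain q N where q: "q 0 = \<one>" "q N = b" "\<forall>i. q i \<in> carrier G"
      "\<forall>i<N. dist (act (q i) x0) (act (q (Suc i)) x0) \<le> D"
      using chain[OF one_closed b] by blast
    have "P (q i)" if "i \<le> N" for i
      using that
    proof (induction i)
      case 0
      then show ?case using q(1) one by simp
    next
      case (Suc i)
      then have "P (q i)" by simp
      then show ?case using step[of "q i" "q (Suc i)"] q(3,4) Suc.prems by simp
    qed
    then show ?thesis using q(2) by blast
  qed
  then show thesis by (rule that)
qed

theorem relatively_finitely_generated:
  assumes "quasi_geodesic_space TYPE('x)"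
  shows "fin_gen_relative G H"
proof -
  obtain D where connected: "\<And>P b. b \<in> carrier G \<Longrightarrow> P \<one> \<Longrightarrow>
    (\<And>c d. c \<in> carrier G \<Longrightarrow> d \<in> carrier G \<Longrightarrow> P c \<Longrightarrow> dist (act c x0) (act d x0) \<le> D \<Longrightarrow> P d) \<Longrightarrow>
    P b"
    using orbit_coarsely_connected[OF assms] by metis
  obtain F where F: "finite F" "F \<subseteq> carrier G"
    and close: "\<forall>a\<in>carrier G. \<forall>b\<in>carrier G.
                  dist (act a x0) (act b x0) \<le> D \<longrightarrow> (\<exists>f\<in>F. b \<in> (a \<otimes> f) <# H)"
    using close_orbit_points_cover by metis
  define Gen where "Gen = generate G (F \<union> H)"
  have FH: "F \<union> H \<subseteq> carrier G" using F(2) stabiliser_carrier by blast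
  have Gen: "subgroup Gen G" unfolding Gen_def by (rule generate_is_subgroup[OF FH])
  have step: "b \<in> Gen" if a: "a \<in> carrier G" "a \<in> Gen" and b: "b \<in> carrier G"
    and close_ab: "dist (act a x0) (act b x0) \<le> D" for a b
  proof -
    obtain f where f: "f \<in> F" "b \<in> (a \<otimes> f) <# H" using close a(1) b close_ab by blast
    then obtain h where h: "h \<in> H" "b = a \<otimes> f \<otimes> h" unfolding l_coset_def by blast
    have "f \<in> Gen" "h \<in> Gen" unfolding Gen_def using f(1) h(1) by (auto intro: generate.incl)
    then show ?thesis using a(2) h(2) subgroup.m_closed[OF Gen] by metis
  qed
  have "g \<in> Gen" if g: "g \<in> carrier G" for g
    using connected[where P = "\<lambda>x. x \<in> Gen", OF g subgroup.one_closed[OF Gen]] step by blast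
  then have "generate G (F \<union> H) = carrier G"
    using generate_incl[OF FH] unfolding Gen_def by blast
  then show ?thesis unfolding fin_gen_relative_def rel_fin_gen_def using F by blast
qed

lemma finite_index_inter_conjugate_in_stabiliser:
  assumes g: "g \<in> carrier G"
  shows "finite_index_in G ((\<lambda>h. g \<otimes> h \<otimes> inv g) ` H \<inter> H) H"
proof -
  define C where "C = (\<lambda>h. g \<otimes> h \<otimes> inv g) ` H"
  have CH: "subgroup (C \<inter> H) G"
    unfolding C_def
    by (rule subgroups_Inter_pair[OF conjugate_subgroup[OF stabiliser_subgroup g] stabiliser_subgroup])
  obtain B where B: "\<forall>h\<in>H. dist (act h x0) x0 \<le> B"
    using stabiliser_orbit_bounded by blast
  \<comment> \<open>\<open>g\<inverse> H g\<close> has bounded orbit, so \<open>?k\<close> has finite image; its fibres lie in cosets of \<open>C \<inter> H\<close>.\<close>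
  let ?k = "\<lambda>t. (inv g \<otimes> t \<otimes> g) <# H"
  have "finite {t <# (C \<inter> H) | t. t \<in> H}"
  proof (rule finite_cosets_if_fibres[OF CH stabiliser_carrier, where k = ?k])
    obtain B' where "\<forall>t\<in>H. dist (act (inv g \<otimes> t \<otimes> g) x0) x0 \<le> B'"
      using bounded_orbit_translate[OF stabiliser_carrier B] g by blast
    then have "finite ((\<lambda>t. t <# H) ` (\<lambda>t. inv g \<otimes> t \<otimes> g) ` H)"
      using g stabiliser_carrier by (intro bounded_orbit_finite_cosets) auto
    then show "finite (?k ` H)" by (simp add: image_image)
  next
    fix t t' assume t: "t \<in> H" "t' \<in> H" and k: "?k t = ?k t'"
    have tc: "t \<in> carrier G" "t' \<in> carrier G" using t stabiliser_carrier by auto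
    define h where "h = inv g \<otimes> (inv t \<otimes> t') \<otimes> g"
    have "h \<in> H"
      using k l_coset_eq_iff[OF stabiliser_subgroup] inv_conjugate_mult[OF g tc] g tc
      unfolding h_def by simp
    moreover have "inv t \<otimes> t' = g \<otimes> h \<otimes> inv g"
      unfolding h_def using conjugation_is_surj g tc by simp
    ultimately have "inv t \<otimes> t' \<in> C" unfolding C_def by blast
    moreover have "inv t \<otimes> t' \<in> H"
      using t stabiliser_subgroup by (simp add: subgroup.m_closed subgroup.m_inv_closed)
    ultimately show "inv t \<otimes> t' \<in> C \<inter> H" by blast
  qed
  then show ?thesis unfolding finite_index_in_def C_def .
qed

lemma finite_index_inter_conjugate_in_conjugate:
  assumes g: "g \<in> carrier G"
  shows "finite_index_in G ((\<lambda>h. g \<otimes> h \<otimes> inv g) ` H \<inter> H) ((\<lambda>h. g \<otimes> h \<otimes> inv g) ` H)"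
proof -
  define C where "C = (\<lambda>h. g \<otimes> h \<otimes> inv g) ` H"
  have C: "subgroup C G"
    unfolding C_def by (rule conjugate_subgroup[OF stabiliser_subgroup g])
  have CH: "subgroup (C \<inter> H) G"
    by (rule subgroups_Inter_pair[OF C stabiliser_subgroup])
  have C_carrier: "C \<subseteq> carrier G" using subgroup.subset[OF C] .
  obtain B where B: "\<forall>h\<in>H. dist (act h x0) x0 \<le> B"
    using stabiliser_orbit_bounded by blast
  have "finite {t <# (C \<inter> H) | t. t \<in> C}"
  proof (rule finite_cosets_if_fibres[OF CH C_carrier, where k = "\<lambda>t. t <# H"])
    obtain B' where "\<forall>t\<in>H. dist (act (g \<otimes> t \<otimes> inv g) x0) x0 \<le> B'"
      using bounded_orbit_translate[OF stabiliser_carrier B] g by blast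
    then show "finite ((\<lambda>t. t <# H) ` C)"
      using C_carrier unfolding C_def by (intro bounded_orbit_finite_cosets) auto
  next
    fix t t' assume t: "t \<in> C" "t' \<in> C" and k: "t <# H = t' <# H"
    have "inv t \<otimes> t' \<in> H"
      using k l_coset_eq_iff[OF stabiliser_subgroup] t C_carrier by blast
    moreover have "inv t \<otimes> t' \<in> C"
      using t C by (simp add: subgroup.m_closed subgroup.m_inv_closed)
    ultimately show "inv t \<otimes> t' \<in> C \<inter> H" by blast
  qed
  then show ?thesis unfolding finite_index_in_def C_def .
qed

theorem commensurated_stabiliser: "commensurated G H"
  unfolding commensurated_def Let_def
  using stabiliser_subgroup finite_index_inter_conjugate_in_stabiliser
    finite_index_inter_conjugate_in_conjugate by blast

end

locale cobounded_quasi_action_cayley =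
  cobounded_quasi_action G act K A r x0 H + relative_cayley_graph G H S
  for G :: "('g, 'm) monoid_scheme" (structure) and act :: "'g \<Rightarrow> 'x::metric_space \<Rightarrow> 'x"
    and K A r x0 H S
begin

lemma word_dist_bounded_if_orbit_close:
  "\<exists>N. \<forall>a\<in>carrier G. \<forall>b\<in>carrier G.
     dist (act a x0) (act b x0) \<le> R \<longrightarrow> word_dist (a <# H) (b <# H) \<le> N"
proof -
  obtain F where F: "finite F" "F \<subseteq> carrier G"
    and close: "\<forall>a\<in>carrier G. \<forall>b\<in>carrier G.
                  dist (act a x0) (act b x0) \<le> R \<longrightarrow> (\<exists>f\<in>F. b \<in> (a \<otimes> f) <# H)"
    using close_orbit_points_cover by metis
  obtain N where N: "\<forall>f\<in>F. \<forall>a\<in>carrier G. word_dist (a <# H) ((a \<otimes> f) <# H) \<le> N"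
    using word_dist_translate_bounded[OF F] by blast
  have "word_dist (a <# H) (b <# H) \<le> N"
    if ab: "a \<in> carrier G" "b \<in> carrier G" and close_ab: "dist (act a x0) (act b x0) \<le> R" for a b
  proof -
    obtain f where f: "f \<in> F" "b \<in> (a \<otimes> f) <# H" using close ab close_ab by blast
    have "a \<otimes> f \<in> carrier G" using ab(1) f(1) F(2) by blast
    then have "(a \<otimes> f) <# H = b <# H" using l_repr_independence[OF f(2) _ H_subgroup] by blast
    then show ?thesis using N f(1) ab(1) by metis
  qed
  then show ?thesis by blast
qed

lemma word_dist_le_orbit_dist:
  assumes "quasi_geodesic_space TYPE('x)"
  obtains c1 c2 where "0 \<le> c1"
    and "\<And>a b. a \<in> carrier G \<Longrightarrow> b \<in> carrier G \<Longrightarrow>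
           word_dist (a <# H) (b <# H) \<le> c1 * dist (act a x0) (act b x0) + c2"
proof -
  obtain c1 c2 D where c1: "0 \<le> c1" and chain: "\<And>a b. a \<in> carrier G \<Longrightarrow> b \<in> carrier G \<Longrightarrow>
           \<exists>q N. q 0 = a \<and> q N = b \<and> real N \<le> c1 * dist (act a x0) (act b x0) + c2 \<and>
                 (\<forall>i. q i \<in> carrier G) \<and> (\<forall>i<N. dist (act (q i) x0) (act (q (Suc i)) x0) \<le> D)"
    using orbit_chain[OF assms] by metis
  obtain N where N: "\<forall>a\<in>carrier G. \<forall>b\<in>carrier G.
     dist (act a x0) (act b x0) \<le> D \<longrightarrow> word_dist (a <# H) (b <# H) \<le> N"
    using word_dist_bounded_if_orbit_close by blast
  define N' where "N' = max N 0"
  have N': "0 \<le> N'" unfolding N'_def by simp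
  have "word_dist (a <# H) (b <# H) \<le> N' * c1 * dist (act a x0) (act b x0) + N' * c2"
    if ab: "a \<in> carrier G" "b \<in> carrier G" for a b
  proof -
    obtain q M where q: "q 0 = a" "q M = b" "real M \<le> c1 * dist (act a x0) (act b x0) + c2"
      "\<forall>i. q i \<in> carrier G" "\<forall>i<M. dist (act (q i) x0) (act (q (Suc i)) x0) \<le> D"
      using chain[OF ab] by blast
    have "\<forall>i<M. word_dist (q i <# H) (q (Suc i) <# H) \<le> N'"
      using N q(4,5) unfolding N'_def by fastforce
    then have "word_dist (a <# H) (b <# H) \<le> N' * M"
      using word_dist_chain[OF q(4)] q(1,2) by blast
    also have "\<dots> \<le> N' * (c1 * dist (act a x0) (act b x0) + c2)"
      using q(3) N' by (rule mult_left_mono)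
    finally show ?thesis by (simp add: algebra_simps)
  qed
  then show thesis using c1 N' by (intro that[of "N' * c1" "N' * c2"]) auto
qed

lemma edge_orbit_dist_bounded:
  "\<exists>D. \<forall>P Q a b. (P, Q) \<in> edges \<longrightarrow> a \<in> P \<longrightarrow> b \<in> Q \<longrightarrow> dist (act a x0) (act b x0) \<le> D"
proof -
  obtain C where C: "\<forall>g\<in>carrier G. \<forall>a\<in>g <# H. dist (act a x0) (act g x0) \<le> C"
    using coset_orbit_bounded by blast
  have "qa_bounded act x0 S"
    unfolding qa_bounded_def using S_rel_gen unfolding rel_fin_gen_def by (simp add: finite_imp_bounded)
  then obtain BS where BS: "\<forall>s\<in>S. dist (act s x0) x0 \<le> BS"
    unfolding qa_bounded_iff by blast
  define D where "D = 2 * C + lip * BS + 2 * A"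
  have oriented: "dist (act a x0) (act b x0) \<le> D"
    if g: "g \<in> carrier G" and s: "s \<in> S" and a: "a \<in> g <# H" and b: "b \<in> (g \<otimes> s) <# H" for g s a b
  proof -
    have sc: "s \<in> carrier G" using s S_carrier by blast
    have "dist (act a x0) (act g x0) \<le> C" using C g a by blast
    moreover have "dist (act b x0) (act (g \<otimes> s) x0) \<le> C" using C g sc b by blast
    moreover have "dist (act (g \<otimes> s) x0) (act g x0) \<le> lip * BS + 2 * A"
      using act_mult_dist[OF g sc, of x0 x0] lip_mult_mono[of "dist (act s x0) x0" BS] BS s
      by fastforce
    ultimately show ?thesis
      unfolding D_def
      using dist_triangle[of "act a x0" "act b x0" "act g x0"]
        dist_triangle[of "act g x0" "act b x0" "act (g \<otimes> s) x0"]
      by (simp add: dist_commute)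
  qed
  have "dist (act a x0) (act b x0) \<le> D" if e: "(P, Q) \<in> edges" and ab: "a \<in> P" "b \<in> Q" for P Q a b
  proof -
    obtain g s where gs: "g \<in> carrier G" "s \<in> S"
      and PQ: "(P = g <# H \<and> Q = (g \<otimes> s) <# H) \<or> (Q = g <# H \<and> P = (g \<otimes> s) <# H)"
      using e unfolding rel_edges_def by blast
    from PQ show ?thesis
    proof
      assume "P = g <# H \<and> Q = (g \<otimes> s) <# H"
      then show ?thesis using oriented[OF gs] ab by blast
    next
      assume "Q = g <# H \<and> P = (g \<otimes> s) <# H"
      then show ?thesis using oriented[OF gs, of b a] ab by (simp add: dist_commute)
    qed
  qed
  then show ?thesis by blast
qed

lemma orbit_dist_le_word_dist:
  obtains D where "\<And>a b. a \<in> carrier G \<Longrightarrow> b \<in> carrier G \<Longrightarrow>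
    dist (act a x0) (act b x0) \<le> D * word_dist (a <# H) (b <# H) + D"
proof -
  obtain C where C: "\<forall>g\<in>carrier G. \<forall>a\<in>g <# H. dist (act a x0) (act g x0) \<le> C"
    using coset_orbit_bounded by blast
  obtain E where E: "\<forall>P Q a b. (P, Q) \<in> edges \<longrightarrow> a \<in> P \<longrightarrow> b \<in> Q \<longrightarrow> dist (act a x0) (act b x0) \<le> E"
    using edge_orbit_dist_bounded by blast
  define D where "D = max C E"
  have walk: "dist (act a x0) (act b x0) \<le> D * n + D"
    if a: "a \<in> carrier G" and walk: "(a <# H, Q) \<in> edges ^^ n" and b: "b \<in> Q" for a n Q b
    using walk b
  proof (induction n arbitrary: Q b)
    case 0
    then have "b \<in> a <# H" by simp
    then have "dist (act b x0) (act a x0) \<le> C" using C a by blast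
    then show ?case unfolding D_def by (simp add: dist_commute)
  next
    case (Suc n)
    then obtain R where R: "(a <# H, R) \<in> edges ^^ n" "(R, Q) \<in> edges" by auto
    obtain c where c: "c \<in> carrier G" "R = c <# H" using edges_source_coset[OF R(2)] by blast
    have cR: "c \<in> R" using lcos_self[OF c(1) H_subgroup] c(2) by simp
    have "dist (act a x0) (act c x0) \<le> D * n + D" using Suc.IH[OF R(1) cR] .
    moreover have "dist (act c x0) (act b x0) \<le> D"
      using E R(2) cR Suc.prems(2) unfolding D_def by fastforce
    ultimately show ?case
      using dist_triangle[of "act a x0" "act b x0" "act c x0"] by (simp add: algebra_simps)
  qed
  have "dist (act a x0) (act b x0) \<le> D * word_dist (a <# H) (b <# H) + D"
    if ab: "a \<in> carrier G" "b \<in> carrier G" for a b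
  proof -
    obtain n where "word_dist (a <# H) (b <# H) = real n" "(a <# H, b <# H) \<in> edges ^^ n"
      using word_dist_attained[OF ab] by blast
    then show ?thesis using walk[OF ab(1)] lcos_self[OF ab(2) H_subgroup] by simp
  qed
  then show thesis by (rule that)
qed

lemma orbit_coset_quasi_isometry:
  assumes "quasi_geodesic_space TYPE('x)"
  shows "quasi_isometric_map dist UNIV word_dist (left_cosets G H) orbit_coset"
proof -
  obtain c1 c2 where c1: "0 \<le> c1" and upper: "\<And>a b. a \<in> carrier G \<Longrightarrow> b \<in> carrier G \<Longrightarrow>
      word_dist (a <# H) (b <# H) \<le> c1 * dist (act a x0) (act b x0) + c2"
    using word_dist_le_orbit_dist[OF assms] by metis
  obtain D where lower: "\<And>a b. a \<in> carrier G \<Longrightarrow> b \<in> carrier G \<Longrightarrow>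
      dist (act a x0) (act b x0) \<le> D * word_dist (a <# H) (b <# H) + D"
    using orbit_dist_le_word_dist by metis
  obtain N where N: "\<forall>a\<in>carrier G. \<forall>b\<in>carrier G.
      dist (act a x0) (act b x0) \<le> r \<longrightarrow> word_dist (a <# H) (b <# H) \<le> N"
    using word_dist_bounded_if_orbit_close by blast
  show ?thesis
  proof (rule quasi_isometric_mapI[where a = c1 and b = "c1 * (2 * r) + c2"
        and c = D and e = "D + 2 * r" and e' = N])
    show "orbit_coset ` UNIV \<subseteq> left_cosets G H"
      unfolding orbit_coset_def left_cosets_def using orbit_rep(1) by auto
    show "word_dist (orbit_coset x) (orbit_coset y) \<le> c1 * dist x y + (c1 * (2 * r) + c2)" for x y
    proof -
      have "word_dist (orbit_coset x) (orbit_coset y)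
          \<le> c1 * dist (act (orbit_rep x) x0) (act (orbit_rep y) x0) + c2"
        unfolding orbit_coset_def using upper[OF orbit_rep(1) orbit_rep(1)] .
      moreover have "c1 * dist (act (orbit_rep x) x0) (act (orbit_rep y) x0) \<le> c1 * (dist x y + 2 * r)"
        using mult_left_mono[OF orbit_rep_dist(1) c1] .
      ultimately show ?thesis by (simp add: distrib_left)
    qed
    show "dist x y \<le> D * word_dist (orbit_coset x) (orbit_coset y) + (D + 2 * r)" for x y
      using lower[OF orbit_rep(1) orbit_rep(1), of x y] orbit_rep_dist(2)[of x y]
      unfolding orbit_coset_def by simp
    show "\<exists>x\<in>UNIV. word_dist (orbit_coset x) z \<le> N" if z: "z \<in> left_cosets G H" for z
    proof -
      obtain g where g: "g \<in> carrier G" "z = g <# H"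
        using z unfolding left_cosets_def by blast
      then have "word_dist (orbit_coset (act g x0)) z \<le> N"
        using N[rule_format, OF orbit_rep(1) g(1) orbit_rep(2)] unfolding orbit_coset_def by simp
      then show ?thesis by blast
    qed
    show "0 \<le> dist x y" for x y :: 'x by simp
    show "0 \<le> word_dist (orbit_coset x) (orbit_coset y)" for x y by (rule word_dist_nonneg)
  qed
qed

lemma orbit_coset_coarsely_equivariant:
  "\<exists>C. \<forall>g\<in>carrier G. \<forall>x. word_dist (g <# orbit_coset x) (orbit_coset (act g x)) \<le> C"
proof -
  obtain N where N: "\<forall>a\<in>carrier G. \<forall>b\<in>carrier G.
      dist (act a x0) (act b x0) \<le> lip * r + 2 * A + r \<longrightarrow> word_dist (a <# H) (b <# H) \<le> N"
    using word_dist_bounded_if_orbit_close by blast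
  have "word_dist (g <# orbit_coset x) (orbit_coset (act g x)) \<le> N" if g: "g \<in> carrier G" for g x
  proof -
    have gx: "g \<otimes> orbit_rep x \<in> carrier G" using g orbit_rep(1) by blast
    have "dist (act (g \<otimes> orbit_rep x) x0) (act g x) \<le> lip * dist (act (orbit_rep x) x0) x + 2 * A"
      using act_mult_dist[OF g orbit_rep(1)] .
    also have "\<dots> \<le> lip * r + 2 * A"
      using lip_mult_mono[OF orbit_rep(2)] by simp
    finally have "dist (act (g \<otimes> orbit_rep x) x0) (act (orbit_rep (act g x)) x0) \<le> lip * r + 2 * A + r"
      using orbit_rep(2)[of "act g x"]
        dist_triangle[of "act (g \<otimes> orbit_rep x) x0" "act (orbit_rep (act g x)) x0" "act g x"]
      by (simp add: dist_commute)
    then have "word_dist ((g \<otimes> orbit_rep x) <# H) (orbit_coset (act g x)) \<le> N"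
      unfolding orbit_coset_def by (rule N[rule_format, OF gx orbit_rep(1)])
    moreover have "g <# orbit_coset x = (g \<otimes> orbit_rep x) <# H"
      unfolding orbit_coset_def using lcos_m_assoc[OF H_carrier g orbit_rep(1)] .
    ultimately show ?thesis by simp
  qed
  then show ?thesis by blast
qed

theorem quasi_conjugate_to_cosets:
  assumes "quasi_geodesic_space TYPE('x)"
  shows "\<exists>f :: 'x \<Rightarrow> 'g set.
           quasi_isometric_map dist UNIV word_dist (left_cosets G H) f \<and>
           (\<exists>C. \<forall>g\<in>carrier G. \<forall>x. word_dist (g <# f x) (f (act g x)) \<le> C)"
  using orbit_coset_quasi_isometry[OF assms] orbit_coset_coarsely_equivariant by blast

end

theorem propositionE:
  fixes G :: "('g, 'm) monoid_scheme"
    and act :: "'g \<Rightarrow> 'x::metric_space \<Rightarrow> 'x"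
    and x0 :: 'x
    and H :: "'g set"
  assumes "group G"
    and "quasi_geodesic_space TYPE('x)"
    and "is_quasi_action G act"
    and "cobounded_qa G act"
    and "coarse_stabiliser G act x0 H"
  shows "fin_gen_relative G H \<and> commensurated G H \<and>
         (\<forall>S. rel_fin_gen G H S \<longrightarrow>
           (\<exists>f :: 'x \<Rightarrow> 'g set.
              quasi_isometric_map dist UNIV (rel_word_dist G H S) (left_cosets G H) f \<and>
              (\<exists>C. \<forall>g\<in>carrier G. \<forall>x. rel_word_dist G H S (l_coset G g (f x)) (f (act g x)) \<le> C)))"
proof -
  obtain K A where "quasi_action G K A act"
    using assms(3) unfolding is_quasi_action_def by blast
  moreover obtain r where "\<forall>x y. \<exists>g\<in>carrier G. dist (act g x) y \<le> r"
    using assms(4) unfolding cobounded_qa_def by blast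
  ultimately have qa: "cobounded_quasi_action G act K A r x0 H"
    using assms(1,5)
    unfolding cobounded_quasi_action_def cobounded_quasi_action_axioms_def by blast
  then interpret cobounded_quasi_action G act K A r x0 H .
  have "\<exists>f :: 'x \<Rightarrow> 'g set.
          quasi_isometric_map dist UNIV (rel_word_dist G H S) (left_cosets G H) f \<and>
          (\<exists>C. \<forall>g\<in>carrier G. \<forall>x. rel_word_dist G H S (l_coset G g (f x)) (f (act g x)) \<le> C)"
    if "rel_fin_gen G H S" for S
  proof -
    interpret cobounded_quasi_action_cayley G act K A r x0 H S
      using qa assms(1) stabiliser_subgroup that
      by (simp add: cobounded_quasi_action_cayley_def relative_cayley_graph_def
          relative_cayley_graph_axioms_def)
    show ?thesis by (rule quasi_conjugate_to_cosets[OF assms(2)])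
  qed
  then show ?thesis
    using relatively_finitely_generated[OF assms(2)] commensurated_stabiliser by blast
qed

end
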